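(* Let $0\le\beta<1$ and let $f=h+\overline{g}\in\widetilde{\mathcal{G}}^{0}_{\mathcal{H}}(\beta)$ with $h(z)=z+\sum_{n=2}^\infty a_nz^n$, $g(z)=\sum_{n=2}^\infty b_nz^n$. Then $|a_n|+|b_n|\le 2(1-\beta)$ for all $n\ge2$, and for all $z\in\mathbb{D}$, $$\beta|z|+(1-\beta)\frac{1-|z|}{1+|z|}|z|\le |f(z)|\le \beta|z|+(1-\beta)\frac{1+|z|}{1-|z|}|z|.$$ Both growth inequalities are sharp: for $f(z)=z+\sum_{n=2}^\infty 2(1-\beta)z^n$ (which lies in $\widetilde{\mathcal{G}}^{0}_{\mathcal{H}}(\beta)$), equality holds on the right at $z=r$ and on the left at $z=-r$, $0\le r<1$.
   Context: $\mathbb{D}=\{z\in\mathbb{C}:|z|<1\}$. $\mathcal{H}_0$ denotes the class of harmonic functions $f=h+\overline{g}$ on $\mathbb{D}$, where $h,g$ are analytic in $\mathbb{D}$ of the form $h(z)=z+\sum_{n=2}^\infty a_nz^n$ and $g(z)=\sum_{n=2}^\infty b_nz^n$. For $0\le\beta<1$, $\widetilde{\mathcal{G}}^{0}_{\mathcal{H}}(\beta)$ is the set of $f=h+\overline{g}\in\mathcal{H}_0$ such that $\operatorname{Re}\big(h(z)/z\big)-\beta>|g(z)/z|$ for all $z\in\mathbb{D}$ (with $h(z)/z$ and $g(z)/z$ extended analytically to $z=0$). *)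

theory Defs
  imports "HOL-Analysis.Analysis"
begin

text \<open>The class H_0: f = h + conj g with h, g analytic in the unit disc,
  h(z) = z + sum a_n z^n (n>=2), g(z) = sum b_n z^n (n>=2), i.e.
  h 0 = 0, h'(0) = 1, g 0 = 0, g'(0) = 0.\<close>
definition in_H0 :: "(complex \<Rightarrow> complex) \<Rightarrow> (complex \<Rightarrow> complex) \<Rightarrow> bool" where
  "in_H0 h g \<longleftrightarrow> h holomorphic_on ball 0 1 \<and> g holomorphic_on ball 0 1 \<and>
     h 0 = 0 \<and> deriv h 0 = 1 \<and> g 0 = 0 \<and> deriv g 0 = 0"

text \<open>Analytic extension of h(z)/z to z = 0 (for h 0 = 0 the value at 0 is h'(0)).\<close>
definition div_z :: "(complex \<Rightarrow> complex) \<Rightarrow> complex \<Rightarrow> complex" where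
  "div_z h z = (if z = 0 then deriv h 0 else h z / z)"

definition G_tilde_H0 :: "real \<Rightarrow> (complex \<Rightarrow> complex) \<Rightarrow> (complex \<Rightarrow> complex) \<Rightarrow> bool" where
  "G_tilde_H0 \<beta> h g \<longleftrightarrow> in_H0 h g \<and>
     (\<forall>z\<in>ball 0 1. Re (div_z h z) - \<beta> > cmod (div_z g z))"

definition tcoeff :: "(complex \<Rightarrow> complex) \<Rightarrow> nat \<Rightarrow> complex" where
  "tcoeff h n = (deriv ^^ n) h 0 / of_nat (fact n)"

end

theory Submission
  imports Defs "HOL-Complex_Analysis.Complex_Analysis"
begin

text \<open>For every \<open>e\<close> with \<open>|e| \<le> 1\<close> the function \<open>\<phi> = h/z + e g/z\<close> is holomorphic in the disc,
  \<open>\<phi> 0 = 1\<close> and \<open>Re \<phi> > \<beta>\<close>, because \<open>|Re (e g/z)| \<le> |g/z| < Re (h/z) - \<beta>\<close>.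
  Such \<open>\<phi>\<close> satisfy the Caratheodory estimates: comparing the Cauchy integral for the
  \<open>m\<close>-th coefficient on a circle of radius \<open>r\<close> with the integral of \<open>2 (Re \<phi> - \<beta>)\<close> gives
  \<open>|c\<^sub>m| r\<^sup>m \<le> 2 (1 - \<beta>)\<close>, and the Schwarz lemma applied to the Cayley transform of
  \<open>(\<phi> - \<beta>) / (1 - \<beta>)\<close> bounds \<open>|\<phi> z|\<close> from above and \<open>Re (\<phi> z)\<close> from below.
  Choosing the unimodular \<open>e\<close> that aligns the coefficients of \<open>h\<close> and \<open>g\<close>, or the values
  \<open>h z / z\<close> and \<open>g z / z\<close>, turns these into the stated bounds.  Equality is attained by
  \<open>h z = z + 2 (1 - \<beta>) z\<^sup>2 / (1 - z)\<close>, \<open>g = 0\<close>.\<close>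

lemma has_integral_circlepath_origin:
  assumes "(f has_contour_integral I) (circlepath 0 r)"
  shows "((\<lambda>t. f (of_real r * cis t) * of_real r * \<i> * cis t) has_integral I) {0..2*pi}"
  using assms unfolding circlepath_def
  by (subst (asm) has_contour_integral_part_circlepath_iff) auto

lemma Cauchy_tcoeff_circlepath:
  fixes f :: "complex \<Rightarrow> complex"
  assumes f: "f holomorphic_on ball 0 1" and r: "0 < r" "r < 1"
  shows "((\<lambda>u. f u / u ^ Suc n) has_contour_integral (2 * pi * \<i> * tcoeff f n)) (circlepath 0 r)"
proof -
  have "cball 0 r \<subseteq> ball 0 1"
    using r by auto
  then have "continuous_on (cball 0 r) f" and "f holomorphic_on ball 0 r"
    using holomorphic_on_subset[OF f] ball_subset_cball
    by (blast intro: holomorphic_on_imp_continuous_on)+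
  from Cauchy_has_contour_integral_higher_derivative_circlepath[OF this, of 0 n]
  have "((\<lambda>u. f u / (u - 0) ^ Suc n) has_contour_integral (2 * pi * \<i> / fact n * (deriv ^^ n) f 0))
      (circlepath 0 r)"
    using r by simp
  then show ?thesis by (simp add: tcoeff_def)
qed

lemma tcoeff_unique_circlepath:
  fixes f :: "complex \<Rightarrow> complex"
  assumes "f holomorphic_on ball 0 1"
    and "((\<lambda>u. f u / u ^ Suc n) has_contour_integral (2 * pi * \<i> * c)) (circlepath 0 (1/2))"
  shows "tcoeff f n = c"
  using has_contour_integral_unique[OF Cauchy_tcoeff_circlepath[OF assms(1), of "1/2" n] assms(2)]
  by simp

lemma tcoeff_add_scaled:
  fixes f g :: "complex \<Rightarrow> complex"
  assumes f: "f holomorphic_on ball 0 1" and g: "g holomorphic_on ball 0 1"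
  shows "tcoeff (\<lambda>w. f w + e * g w) n = tcoeff f n + e * tcoeff g n"
proof (rule tcoeff_unique_circlepath)
  show "(\<lambda>w. f w + e * g w) holomorphic_on ball 0 1"
    using f g by (intro holomorphic_intros)
  have "((\<lambda>u. f u / u ^ Suc n + e * (g u / u ^ Suc n)) has_contour_integral
      (2 * pi * \<i> * tcoeff f n + e * (2 * pi * \<i> * tcoeff g n))) (circlepath 0 (1/2))"
    by (intro has_contour_integral_add has_contour_integral_lmul Cauchy_tcoeff_circlepath f g) auto
  moreover have "(\<lambda>u. f u / u ^ Suc n + e * (g u / u ^ Suc n)) = (\<lambda>u. (f u + e * g u) / u ^ Suc n)"
    by (simp add: add_divide_distrib)
  moreover have "2 * pi * \<i> * tcoeff f n + e * (2 * pi * \<i> * tcoeff g n)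
      = 2 * pi * \<i> * (tcoeff f n + e * tcoeff g n)"
    by (simp add: distrib_left mult.left_commute)
  ultimately show "((\<lambda>u. (f u + e * g u) / u ^ Suc n) has_contour_integral
      (2 * pi * \<i> * (tcoeff f n + e * tcoeff g n))) (circlepath 0 (1/2))"
    by simp
qed

lemma div_z_holomorphic:
  assumes "h holomorphic_on ball 0 1" and "h 0 = 0"
  shows "div_z h holomorphic_on ball 0 1"
proof -
  have "(\<lambda>z. if z = 0 then deriv h 0 else (h z - h 0) / (z - 0)) holomorphic_on ball 0 1"
    by (rule pole_lemma[OF assms(1)]) simp
  moreover have "(\<lambda>z. if z = 0 then deriv h 0 else (h z - h 0) / (z - 0)) = div_z h"
    using assms(2) by (auto simp: div_z_def)
  ultimately show ?thesis by simp
qed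

lemma tcoeff_div_z:
  assumes h: "h holomorphic_on ball 0 1" and h0: "h 0 = 0"
  shows "tcoeff (div_z h) n = tcoeff h (Suc n)"
proof (rule tcoeff_unique_circlepath[OF div_z_holomorphic[OF h h0]])
  show "((\<lambda>u. div_z h u / u ^ Suc n) has_contour_integral (2 * pi * \<i> * tcoeff h (Suc n)))
      (circlepath 0 (1/2))"
  proof (rule has_contour_integral_eq[OF Cauchy_tcoeff_circlepath[OF h]])
    fix u assume "u \<in> path_image (circlepath 0 (1/2))"
    then have "u \<noteq> 0" by (auto simp: path_image_circlepath)
    then show "h u / u ^ Suc (Suc n) = div_z h u / u ^ Suc n" by (simp add: div_z_def)
  qed auto
qed

lemma has_integral_mult_left_cong:
  fixes c :: complex
  assumes "(f has_integral I) S" and "\<And>t. c * f t = g t" and "c * I = J"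
  shows "(g has_integral J) S"
  using has_integral_mult_right[OF assms(1), of c] assms(2,3) by simp

lemma has_integral_circle_cis_neg:
  fixes f :: "complex \<Rightarrow> complex"
  assumes f: "f holomorphic_on ball 0 1" and r: "0 < r" "r < 1"
  shows "((\<lambda>t. f (of_real r * cis t) * cis (- (real m * t))) has_integral
      (2 * pi * tcoeff f m * of_real r ^ m)) {0..2*pi}"
  using has_integral_circlepath_origin[OF Cauchy_tcoeff_circlepath[OF f r]]
proof (rule has_integral_mult_left_cong[where c = "of_real r ^ m / \<i>"])
  fix t
  have "(of_real r * cis t) ^ Suc m = of_real r ^ Suc m * cis (real (Suc m) * t)"
    by (simp only: power_mult_distrib Complex.DeMoivre)
  moreover have "cis t / cis (real (Suc m) * t) = cis (- (real m * t))"
    by (simp add: cis_divide algebra_simps)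
  ultimately show "of_real r ^ m / \<i> * (f (of_real r * cis t) / (of_real r * cis t) ^ Suc m
      * of_real r * \<i> * cis t) = f (of_real r * cis t) * cis (- (real m * t))"
    using r by (simp add: field_simps)
qed (simp add: field_simps)

lemma has_integral_circle_cis_pos:
  fixes f :: "complex \<Rightarrow> complex"
  assumes f: "f holomorphic_on ball 0 1" and r: "0 < r" "r < 1" and m: "m \<ge> 1"
  shows "((\<lambda>t. f (of_real r * cis t) * cis (real m * t)) has_integral 0) {0..2*pi}"
proof -
  have "(\<lambda>u. f u * u ^ (m - 1)) holomorphic_on ball 0 1"
    using f by (intro holomorphic_intros)
  moreover have "path_image (circlepath 0 r) \<subseteq> ball 0 1"
    using r by (auto simp: path_image_circlepath)
  ultimately have "((\<lambda>u. f u * u ^ (m - 1)) has_contour_integral 0) (circlepath 0 r)"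
    by (intro Cauchy_theorem_convex_simple[OF _ convex_ball valid_path_circlepath]) auto
  from has_integral_circlepath_origin[OF this] show ?thesis
  proof (rule has_integral_mult_left_cong[where c = "inverse (of_real r ^ m * \<i>)"])
    fix t
    have "(of_real r * cis t) ^ (m - 1) * (of_real r * cis t) = (of_real r * cis t) ^ m"
      using m by (simp add: power_Suc2[symmetric])
    also have "\<dots> = of_real r ^ m * cis (real m * t)"
      by (simp only: power_mult_distrib Complex.DeMoivre)
    finally show "inverse (of_real r ^ m * \<i>) * (f (of_real r * cis t) * (of_real r * cis t) ^ (m - 1)
        * of_real r * \<i> * cis t) = f (of_real r * cis t) * cis (real m * t)"
      using r by (simp add: field_simps)
  qed simp
qed

lemma norm_tcoeff_mult_power_le:
  fixes \<phi> :: "complex \<Rightarrow> complex" and \<beta> :: real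
  assumes hol: "\<phi> holomorphic_on ball 0 1" and \<phi>0: "\<phi> 0 = 1"
    and Re_gt: "\<And>z. z \<in> ball 0 1 \<Longrightarrow> \<beta> < Re (\<phi> z)"
    and m: "m \<ge> 1" and r: "0 < r" "r < 1"
  shows "cmod (tcoeff \<phi> m) * r ^ m \<le> 2 * (1 - \<beta>)"
proof -
  define F where "F t = \<phi> (of_real r * cis t)" for t
  define E where "E t = cis (- (real m * t))" for t
  have const: "(\<lambda>_. c) holomorphic_on ball 0 1" for c :: complex
    by simp
  have cnj_cis: "cnj \<circ> (\<lambda>t. a t * cis (real m * t)) = (\<lambda>t. cnj (a t) * E t)" for a
    by (auto simp: E_def cis_cnj)
  have FE: "((\<lambda>t. F t * E t) has_integral (2 * pi * tcoeff \<phi> m * of_real r ^ m)) {0..2*pi}"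
    using has_integral_circle_cis_neg[OF hol r] unfolding F_def E_def .
  have cnjF_E: "((\<lambda>t. cnj (F t) * E t) has_integral 0) {0..2*pi}"
    using has_integral_circle_cis_pos[OF hol r m, THEN has_integral_cnj[THEN iffD2]]
    unfolding F_def cnj_cis by simp
  have E_int: "(E has_integral 0) {0..2*pi}"
    using has_integral_circle_cis_pos[OF const r m, of 1, THEN has_integral_cnj[THEN iffD2]]
    using cnj_cis[of "\<lambda>_. 1"] by simp
  have F_int: "(F has_integral (2 * complex_of_real pi)) {0..2*pi}"
    using has_integral_circle_cis_neg[OF hol r, of 0] \<phi>0 unfolding F_def by (simp add: tcoeff_def)
  have one_int: "((\<lambda>_. 1) has_integral (2 * complex_of_real pi)) {0..2*pi}"
    using has_integral_circle_cis_neg[OF const r, of 1 0] by (simp add: tcoeff_def)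
  \<comment> \<open>\<open>(F + cnj F - 2\<beta>) E = 2 (Re F - \<beta>) E\<close> integrates to \<open>2\<pi> c r^m\<close>,
    while its modulus \<open>2 (Re F - \<beta>)\<close> integrates to \<open>4\<pi> (1 - \<beta>)\<close>.\<close>
  define G where "G t = F t * E t + cnj (F t) * E t - (2 * of_real \<beta>) * E t" for t
  define K where "K t = 2 * (F t - of_real \<beta>)" for t
  have G_int: "(G has_integral (2 * pi * tcoeff \<phi> m * of_real r ^ m)) {0..2*pi}"
    using has_integral_diff[OF has_integral_add[OF FE cnjF_E] has_integral_mult_right[OF E_int]]
    unfolding G_def[abs_def] by simp
  have K_int: "(K has_integral (2 * (2 * complex_of_real pi - of_real \<beta> * (2 * complex_of_real pi)))) {0..2*pi}"
    unfolding K_def[abs_def]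
    by (intro has_integral_mult_right has_integral_diff F_int)
      (use has_integral_mult_right[OF one_int, of "of_real \<beta>"] in simp)
  have "norm (G t) \<le> K t \<bullet> 1" if "t \<in> {0..2*pi}" for t
  proof -
    have "G t = (F t + cnj (F t) - 2 * of_real \<beta>) * E t"
      unfolding G_def by (simp add: algebra_simps)
    then have "G t = of_real (2 * (Re (F t) - \<beta>)) * E t"
      unfolding complex_add_cnj by simp
    moreover have "\<beta> < Re (F t)"
      using Re_gt r unfolding F_def by (simp add: norm_mult)
    ultimately show ?thesis
      by (simp only: norm_mult norm_of_real) (simp add: E_def K_def)
  qed
  from has_integral_norm_bound_integral_component[OF G_int K_int this]
  have "2 * pi * (cmod (tcoeff \<phi> m) * r ^ m) \<le> 2 * pi * (2 * (1 - \<beta>))"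
    using r by (simp add: norm_mult norm_power algebra_simps)
  then show ?thesis by simp
qed

lemma le_of_mult_power_le:
  fixes A B :: real
  assumes "\<And>r. 0 < r \<Longrightarrow> r < 1 \<Longrightarrow> A * r ^ m \<le> B"
  shows "A \<le> B"
proof -
  have "((\<lambda>r. A * r ^ m) \<longlongrightarrow> A * 1 ^ m) (at_left (1::real))"
    by (intro tendsto_intros)
  moreover have "eventually (\<lambda>r. r \<in> {0<..<1}) (at_left (1::real))"
    by (rule eventually_at_left_real) simp
  then have "eventually (\<lambda>r. A * r ^ m \<le> B) (at_left (1::real))"
    by eventually_elim (use assms in auto)
  ultimately have "A * 1 ^ m \<le> B"
    by (intro tendsto_upperbound) (auto simp: trivial_limit_at_left_real)
  then show ?thesis by simp
qed

lemma norm_tcoeff_le_of_Re_gt: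
  fixes \<phi> :: "complex \<Rightarrow> complex" and \<beta> :: real
  assumes "\<phi> holomorphic_on ball 0 1" and "\<phi> 0 = 1"
    and "\<And>z. z \<in> ball 0 1 \<Longrightarrow> \<beta> < Re (\<phi> z)" and "m \<ge> 1"
  shows "cmod (tcoeff \<phi> m) \<le> 2 * (1 - \<beta>)"
  using norm_tcoeff_mult_power_le[OF assms] by (rule le_of_mult_power_le)

lemma norm_diff_one_less_norm_add_one:
  fixes q :: complex
  assumes "0 < Re q"
  shows "cmod (q - 1) < cmod (q + 1)"
proof -
  have "cmod (q - 1) ^ 2 = (Re q - 1) ^ 2 + Im q ^ 2" and "cmod (q + 1) ^ 2 = (Re q + 1) ^ 2 + Im q ^ 2"
    by (simp_all add: cmod_power2)
  then have "cmod (q - 1) ^ 2 < cmod (q + 1) ^ 2"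
    using assms by (simp add: power2_eq_square algebra_simps)
  then show ?thesis by (rule power2_less_imp_less) simp
qed

lemma Cayley_bounds:
  fixes w :: complex and \<rho> :: real
  assumes w: "cmod w \<le> \<rho>" and \<rho>: "\<rho> < 1"
  shows "cmod ((1 + w) / (1 - w)) \<le> (1 + \<rho>) / (1 - \<rho>)"
    and "(1 - \<rho>) / (1 + \<rho>) \<le> Re ((1 + w) / (1 - w))"
proof -
  define s where "s = cmod w"
  have s: "0 \<le> s" "s \<le> \<rho>" "s < 1"
    using w \<rho> by (auto simp: s_def)
  have "cmod ((1 + w) / (1 - w)) = cmod (1 + w) / cmod (1 - w)"
    by (simp add: norm_divide)
  also have "\<dots> \<le> (1 + s) / (1 - s)"
    using norm_triangle_ineq[of 1 w] norm_triangle_ineq2[of 1 w] s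
    by (intro frac_le) (auto simp: s_def)
  also have "\<dots> \<le> (1 + \<rho>) / (1 - \<rho>)"
    using s \<rho> by (simp add: divide_simps) (simp add: algebra_simps)
  finally show "cmod ((1 + w) / (1 - w)) \<le> (1 + \<rho>) / (1 - \<rho>)" .
  define x where "x = Re w"
  define y where "y = Im w"
  have sq: "s ^ 2 = x ^ 2 + y ^ 2"
    unfolding s_def x_def y_def by (simp add: cmod_power2)
  have x: "- s \<le> x" "x < 1"
    using abs_Re_le_cmod[of w] s unfolding x_def s_def by linarith+
  have den: "0 < (1 - x) ^ 2 + y ^ 2" "(1 - x) ^ 2 + y ^ 2 \<le> (1 + s) ^ 2"
    using x(2) by (simp add: add_pos_nonneg)
      (use sq x(1) s(1) in \<open>simp add: power2_eq_square algebra_simps\<close>)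
  have "(1 - \<rho>) / (1 + \<rho>) \<le> (1 - s) / (1 + s)"
    using s \<rho> by (simp add: divide_simps) (simp add: algebra_simps)
  also have "\<dots> = (1 - s ^ 2) / (1 + s) ^ 2"
    using s by (simp add: power2_eq_square divide_simps) (simp add: algebra_simps)
  also have "\<dots> \<le> (1 - s ^ 2) / ((1 - x) ^ 2 + y ^ 2)"
    using den s by (intro divide_left_mono) (auto simp: power2_eq_square mult_le_one)
  also have "\<dots> = Re ((1 + w) / (1 - w))"
    using sq unfolding x_def y_def by (simp add: Re_divide power2_eq_square algebra_simps)
  finally show "(1 - \<rho>) / (1 + \<rho>) \<le> Re ((1 + w) / (1 - w))" .
qed

lemma Re_pos_growth:
  fixes p :: "complex \<Rightarrow> complex"
  assumes hol: "p holomorphic_on ball 0 1" and p0: "p 0 = 1"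
    and Re_pos: "\<And>z. z \<in> ball 0 1 \<Longrightarrow> 0 < Re (p z)" and z: "z \<in> ball 0 1"
  shows "cmod (p z) \<le> (1 + cmod z) / (1 - cmod z)"
    and "(1 - cmod z) / (1 + cmod z) \<le> Re (p z)"
proof -
  define \<omega> where "\<omega> w = (p w - 1) / (p w + 1)" for w
  have nz: "p w + 1 \<noteq> 0" if "w \<in> ball 0 1" for w
  proof -
    have "0 < Re (p w + 1)"
      using Re_pos[OF that] by simp
    then show ?thesis
      by (metis zero_complex.simps(1) less_irrefl)
  qed
  have "\<omega> holomorphic_on ball 0 1"
    unfolding \<omega>_def using hol nz by (intro holomorphic_intros) auto
  moreover have "\<omega> 0 = 0"
    unfolding \<omega>_def p0 by simp
  moreover have \<omega>1: "norm (\<omega> w) < 1" if "norm w < 1" for w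
    using norm_diff_one_less_norm_add_one[OF Re_pos] nz that
    by (simp add: \<omega>_def norm_divide divide_less_eq)
  ultimately have Schwarz: "norm (\<omega> z) \<le> norm z"
    using z by (intro Schwarz_Lemma(1)) auto
  have "\<omega> z * (p z + 1) = p z - 1"
    unfolding \<omega>_def using nz[OF z] by simp
  then have "p z * (1 - \<omega> z) = 1 + \<omega> z"
    by (simp add: algebra_simps)
  moreover have "\<omega> z \<noteq> 1"
    using \<omega>1 z by force
  ultimately have "p z = (1 + \<omega> z) / (1 - \<omega> z)"
    by (simp add: field_simps)
  then show "cmod (p z) \<le> (1 + cmod z) / (1 - cmod z)"
    and "(1 - cmod z) / (1 + cmod z) \<le> Re (p z)"
    using Cayley_bounds[OF Schwarz] z by auto
qed

lemma Re_gt_growth: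
  fixes \<phi> :: "complex \<Rightarrow> complex" and \<beta> :: real
  assumes hol: "\<phi> holomorphic_on ball 0 1" and \<phi>0: "\<phi> 0 = 1"
    and Re_gt: "\<And>z. z \<in> ball 0 1 \<Longrightarrow> \<beta> < Re (\<phi> z)"
    and \<beta>: "0 \<le> \<beta>" "\<beta> < 1" and z: "z \<in> ball 0 1"
  shows "cmod (\<phi> z) \<le> \<beta> + (1 - \<beta>) * ((1 + cmod z) / (1 - cmod z))"
    and "\<beta> + (1 - \<beta>) * ((1 - cmod z) / (1 + cmod z)) \<le> Re (\<phi> z)"
proof -
  define p where "p w = (\<phi> w - of_real \<beta>) / of_real (1 - \<beta>)" for w
  have \<beta>': "(of_real (1 - \<beta>) :: complex) \<noteq> 0"
    using \<beta> by simp
  have "p holomorphic_on ball 0 1"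
    unfolding p_def using hol \<beta>' by (intro holomorphic_intros) auto
  moreover have "p 0 = 1"
    unfolding p_def \<phi>0 using \<beta>' by simp
  moreover have "0 < Re (p w)" if "w \<in> ball 0 1" for w
    using Re_gt[OF that] \<beta> unfolding p_def by (simp add: Re_divide_of_real)
  ultimately have p: "cmod (p z) \<le> (1 + cmod z) / (1 - cmod z)"
      "(1 - cmod z) / (1 + cmod z) \<le> Re (p z)"
    using Re_pos_growth[of p, OF _ _ _ z] by blast+
  have \<phi>z: "\<phi> z = of_real \<beta> + of_real (1 - \<beta>) * p z"
    unfolding p_def using \<beta>' by simp
  have "cmod (\<phi> z) \<le> cmod (of_real \<beta> :: complex) + cmod (of_real (1 - \<beta>) * p z)"
    unfolding \<phi>z by (rule norm_triangle_ineq)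
  also have "\<dots> = \<beta> + (1 - \<beta>) * cmod (p z)"
    using \<beta> by (simp only: norm_mult norm_of_real abs_of_nonneg)
  also have "\<dots> \<le> \<beta> + (1 - \<beta>) * ((1 + cmod z) / (1 - cmod z))"
    using mult_left_mono[OF p(1), of "1 - \<beta>"] \<beta> by simp
  finally show "cmod (\<phi> z) \<le> \<beta> + (1 - \<beta>) * ((1 + cmod z) / (1 - cmod z))" .
  show "\<beta> + (1 - \<beta>) * ((1 - cmod z) / (1 + cmod z)) \<le> Re (\<phi> z)"
    unfolding \<phi>z using mult_left_mono[OF p(2), of "1 - \<beta>"] \<beta> by simp
qed

lemma exists_unimodular_norm_add:
  fixes a b :: complex
  shows "\<exists>e. cmod e = 1 \<and> cmod (a + e * b) = cmod a + cmod b"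
proof (cases "a = 0 \<or> b = 0")
  case True
  then show ?thesis by (intro exI[of _ 1]) auto
next
  case False
  define e where "e = (a / of_real (cmod a)) * (of_real (cmod b) / b)"
  have "cmod e = 1"
    using False by (simp add: e_def norm_mult norm_divide)
  moreover have "a + e * b = a * of_real (1 + cmod b / cmod a)"
    using False by (simp add: e_def field_simps)
  then have "cmod (a + e * b) = cmod a * (1 + cmod b / cmod a)"
    by (simp only: norm_mult norm_of_real) simp
  then have "cmod (a + e * b) = cmod a + cmod b"
    using False by (simp add: field_simps)
  ultimately show ?thesis by blast
qed

lemma exists_unimodular_Re_mult_eq_neg_norm:
  fixes b :: complex
  shows "\<exists>e. cmod e = 1 \<and> Re (e * b) = - cmod b"
proof (cases "b = 0")
  case True
  then show ?thesis by (intro exI[of _ 1]) auto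
next
  case False
  define e where "e = - cnj b / of_real (cmod b)"
  have "cmod e = 1"
    using False by (simp add: e_def norm_divide)
  moreover have "cnj b * b = of_real (cmod b ^ 2)"
    using complex_norm_square[of b] by (simp add: mult.commute)
  then have "e * b = - of_real (cmod b)"
    using False by (simp add: e_def field_simps power2_eq_square)
  ultimately show ?thesis
    by (intro exI[of _ e]) (simp del: times_complex.sel)
qed

lemma G_tilde_H0_combination:
  assumes G: "G_tilde_H0 \<beta> h g" and e: "cmod e \<le> 1"
  shows "(\<lambda>w. div_z h w + e * div_z g w) holomorphic_on ball 0 1"
    and "div_z h 0 + e * div_z g 0 = 1"
    and "\<And>w. w \<in> ball 0 1 \<Longrightarrow> \<beta> < Re (div_z h w + e * div_z g w)"
proof -
  have H: "h holomorphic_on ball 0 1" "g holomorphic_on ball 0 1"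
      "h 0 = 0" "deriv h 0 = 1" "g 0 = 0" "deriv g 0 = 0"
    and R: "\<And>z. z \<in> ball 0 1 \<Longrightarrow> cmod (div_z g z) < Re (div_z h z) - \<beta>"
    using G unfolding G_tilde_H0_def in_H0_def by auto
  show "(\<lambda>w. div_z h w + e * div_z g w) holomorphic_on ball 0 1"
    using div_z_holomorphic[OF H(1,3)] div_z_holomorphic[OF H(2,5)] by (intro holomorphic_intros)
  show "div_z h 0 + e * div_z g 0 = 1"
    using H by (simp add: div_z_def)
  fix w :: complex assume w: "w \<in> ball 0 1"
  have "\<bar>Re (e * div_z g w)\<bar> \<le> cmod (e * div_z g w)"
    by (rule abs_Re_le_cmod)
  also have "\<dots> \<le> cmod (div_z g w)"
    using e by (simp add: norm_mult mult_left_le_one_le)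
  finally have "\<bar>Re (e * div_z g w)\<bar> \<le> cmod (div_z g w)" .
  then show "\<beta> < Re (div_z h w + e * div_z g w)"
    using R[OF w] by simp
qed

lemma G_tilde_H0_coeff_bound:
  assumes G: "G_tilde_H0 \<beta> h g" and n: "n \<ge> 2"
  shows "cmod (tcoeff h n) + cmod (tcoeff g n) \<le> 2 * (1 - \<beta>)"
proof -
  have H: "h holomorphic_on ball 0 1" "g holomorphic_on ball 0 1" "h 0 = 0" "g 0 = 0"
    using G unfolding G_tilde_H0_def in_H0_def by auto
  obtain e where e: "cmod e = 1"
    and e_align: "cmod (tcoeff h n + e * tcoeff g n) = cmod (tcoeff h n) + cmod (tcoeff g n)"
    using exists_unimodular_norm_add by blast
  define \<phi> where "\<phi> w = div_z h w + e * div_z g w" for w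
  have \<phi>: "\<phi> holomorphic_on ball 0 1" "\<phi> 0 = 1" "\<And>w. w \<in> ball 0 1 \<Longrightarrow> \<beta> < Re (\<phi> w)"
    using G_tilde_H0_combination[OF G, of e] e unfolding \<phi>_def[abs_def] by auto
  have "tcoeff \<phi> (n - 1) = tcoeff (div_z h) (n - 1) + e * tcoeff (div_z g) (n - 1)"
    unfolding \<phi>_def[abs_def] using H by (intro tcoeff_add_scaled div_z_holomorphic)
  also have "\<dots> = tcoeff h n + e * tcoeff g n"
    using H n by (simp add: tcoeff_div_z)
  finally show ?thesis
    using norm_tcoeff_le_of_Re_gt[OF \<phi>, of "n - 1"] n e_align by simp
qed

lemma mult_div_z: "h 0 = 0 \<Longrightarrow> h z = z * div_z h z"
  by (simp add: div_z_def)

lemma G_tilde_H0_growth_upper: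
  assumes G: "G_tilde_H0 \<beta> h g" and \<beta>: "0 \<le> \<beta>" "\<beta> < 1" and z: "z \<in> ball 0 1"
  shows "cmod (h z + cnj (g z)) \<le> \<beta> * cmod z + (1 - \<beta>) * ((1 + cmod z) / (1 - cmod z)) * cmod z"
proof -
  have "h 0 = 0" "g 0 = 0"
    using G unfolding G_tilde_H0_def in_H0_def by auto
  then have hz: "h z = z * div_z h z" and gz: "g z = z * div_z g z"
    by (simp_all only: mult_div_z[of h z] mult_div_z[of g z])
  obtain e where e: "cmod e = 1"
    and e_align: "cmod (div_z h z + e * div_z g z) = cmod (div_z h z) + cmod (div_z g z)"
    using exists_unimodular_norm_add by blast
  note \<phi> = G_tilde_H0_combination[OF G, of e]
  have "cmod (h z + cnj (g z)) \<le> cmod (h z) + cmod (cnj (g z))"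
    by (rule norm_triangle_ineq)
  also have "\<dots> = cmod z * cmod (div_z h z + e * div_z g z)"
    unfolding hz gz e_align by (simp add: norm_mult distrib_left)
  also have "\<dots> \<le> cmod z * (\<beta> + (1 - \<beta>) * ((1 + cmod z) / (1 - cmod z)))"
    using Re_gt_growth(1)[OF \<phi> \<beta> z] e by (intro mult_left_mono) auto
  finally show ?thesis
    by (simp add: algebra_simps)
qed

lemma G_tilde_H0_growth_lower:
  assumes G: "G_tilde_H0 \<beta> h g" and \<beta>: "0 \<le> \<beta>" "\<beta> < 1" and z: "z \<in> ball 0 1"
  shows "\<beta> * cmod z + (1 - \<beta>) * ((1 - cmod z) / (1 + cmod z)) * cmod z \<le> cmod (h z + cnj (g z))"
proof -
  have "h 0 = 0" "g 0 = 0"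
    using G unfolding G_tilde_H0_def in_H0_def by auto
  then have hz: "h z = z * div_z h z" and gz: "g z = z * div_z g z"
    by (simp_all only: mult_div_z[of h z] mult_div_z[of g z])
  obtain e where e: "cmod e = 1" and e_align: "Re (e * div_z g z) = - cmod (div_z g z)"
    using exists_unimodular_Re_mult_eq_neg_norm by blast
  note \<phi> = G_tilde_H0_combination[OF G, of e]
  have "cmod z * (\<beta> + (1 - \<beta>) * ((1 - cmod z) / (1 + cmod z)))
      \<le> cmod z * Re (div_z h z + e * div_z g z)"
    using Re_gt_growth(2)[OF \<phi> \<beta> z] e by (intro mult_left_mono) auto
  also have "\<dots> = cmod z * (Re (div_z h z) - cmod (div_z g z))"
    using e_align by simp
  also have "\<dots> \<le> cmod z * (cmod (div_z h z) - cmod (div_z g z))"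
    by (intro mult_left_mono) (auto simp: complex_Re_le_cmod)
  also have "\<dots> = cmod (h z) - cmod (cnj (g z))"
    unfolding hz gz by (simp add: norm_mult right_diff_distrib)
  also have "\<dots> \<le> cmod (h z + cnj (g z))"
    using norm_diff_ineq[of "h z" "cnj (g z)"] by simp
  finally show ?thesis
    by (simp add: algebra_simps)
qed

definition extremal_h :: "real \<Rightarrow> complex \<Rightarrow> complex" where
  "extremal_h \<beta> z = z + (\<Sum>n. of_real (2 * (1 - \<beta>)) * z ^ (n + 2))"

lemma extremal_h_closed_form:
  assumes "cmod z < 1"
  shows "extremal_h \<beta> z = z + of_real (2 * (1 - \<beta>)) * z ^ 2 / (1 - z)"
proof -
  have "(\<lambda>n. of_real (2 * (1 - \<beta>)) * z ^ 2 * z ^ n) sums (of_real (2 * (1 - \<beta>)) * z ^ 2 * (1 / (1 - z)))"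
    by (intro sums_mult geometric_sums assms)
  moreover have "(\<lambda>n. of_real (2 * (1 - \<beta>)) * z ^ 2 * z ^ n) = (\<lambda>n. of_real (2 * (1 - \<beta>)) * z ^ (n + 2))"
    by (simp add: power_add power2_eq_square mult_ac)
  ultimately have "(\<lambda>n. of_real (2 * (1 - \<beta>)) * z ^ (n + 2)) sums (of_real (2 * (1 - \<beta>)) * z ^ 2 / (1 - z))"
    by simp
  then show ?thesis
    by (simp add: extremal_h_def sums_iff)
qed

lemma Re_div_one_minus_gt:
  fixes z :: complex
  assumes "cmod z < 1"
  shows "- 1 / 2 < Re (z / (1 - z))"
proof -
  define x where "x = Re z"
  define y where "y = Im z"
  have "cmod z ^ 2 < 1"
    using assms by (simp add: power_less_one_iff)
  then have sq: "x ^ 2 + y ^ 2 < 1"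
    unfolding x_def y_def by (simp add: cmod_power2)
  have "x < 1"
    using abs_Re_le_cmod[of z] assms unfolding x_def by linarith
  then have "0 < (1 - x) ^ 2 + y ^ 2"
    by (simp add: add_pos_nonneg)
  then have "- 1 / 2 < (x * (1 - x) + y * (- y)) / ((1 - x) ^ 2 + y ^ 2)"
    using sq by (simp add: divide_simps) (simp add: power2_eq_square algebra_simps)
  then show ?thesis
    unfolding x_def y_def by (simp add: Re_divide power2_eq_square)
qed

lemma G_tilde_H0_extremal:
  assumes \<beta>: "\<beta> < 1"
  shows "G_tilde_H0 \<beta> (extremal_h \<beta>) (\<lambda>_. 0)"
proof -
  define c :: complex where "c = of_real (2 * (1 - \<beta>))"
  define H where "H z = z + c * z ^ 2 / (1 - z)" for z
  have hH: "extremal_h \<beta> z = H z" if "z \<in> ball 0 1" for z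
    using extremal_h_closed_form[of z \<beta>] that by (simp add: H_def c_def)
  have "H holomorphic_on ball 0 1"
    unfolding H_def by (intro holomorphic_intros) auto
  then have hol: "extremal_h \<beta> holomorphic_on ball 0 1"
    by (rule holomorphic_transform) (simp add: hH)
  have "(H has_field_derivative 1) (at 0)"
    unfolding H_def by (auto intro!: derivative_eq_intros)
  then have "(extremal_h \<beta> has_field_derivative 1) (at 0)"
    by (rule has_field_derivative_transform_within_open[OF _ open_ball[of 0 1]]) (auto simp: hH)
  then have d: "deriv (extremal_h \<beta>) 0 = 1"
    by (rule DERIV_imp_deriv)
  have "\<beta> < Re (div_z (extremal_h \<beta>) z)" if z: "z \<in> ball 0 1" for z
  proof (cases "z = 0")
    case True
    then show ?thesis using d \<beta> by (simp add: div_z_def)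
  next
    case False
    then have "div_z (extremal_h \<beta>) z = 1 + c * (z / (1 - z))"
      using hH[OF z] by (simp add: div_z_def H_def field_simps power2_eq_square)
    moreover have "Re (c * w) = 2 * (1 - \<beta>) * Re w" for w
      by (simp add: c_def)
    ultimately have "Re (div_z (extremal_h \<beta>) z) = 1 + 2 * (1 - \<beta>) * Re (z / (1 - z))"
      by (simp only: plus_complex.sel one_complex.sel)
    moreover have "2 * (1 - \<beta>) * (- 1 / 2) < 2 * (1 - \<beta>) * Re (z / (1 - z))"
      using Re_div_one_minus_gt[of z] z \<beta> by (intro mult_strict_left_mono) auto
    ultimately show ?thesis
      by (simp add: algebra_simps)
  qed
  moreover have "extremal_h \<beta> 0 = 0"
    using hH[of 0] by (simp add: H_def)
  moreover have "div_z (\<lambda>_. 0) z = 0" for z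
    by (simp add: div_z_def)
  ultimately show ?thesis
    using hol d by (simp add: G_tilde_H0_def in_H0_def)
qed

lemma extremal_h_real:
  assumes \<beta>: "0 \<le> \<beta>" "\<beta> < 1" and r: "0 \<le> r" "r < 1"
  shows "cmod (extremal_h \<beta> (of_real r)) = \<beta> * r + (1 - \<beta>) * ((1 + r) / (1 - r)) * r"
    and "cmod (extremal_h \<beta> (- of_real r)) = \<beta> * r + (1 - \<beta>) * ((1 - r) / (1 + r)) * r"
proof -
  have "extremal_h \<beta> (of_real r) = of_real (r + 2 * (1 - \<beta>) * r ^ 2 / (1 - r))"
    using extremal_h_closed_form[of "of_real r" \<beta>] r by simp
  moreover have "r + 2 * (1 - \<beta>) * r ^ 2 / (1 - r) = \<beta> * r + (1 - \<beta>) * ((1 + r) / (1 - r)) * r"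
    using r by (simp add: field_simps power2_eq_square)
  ultimately show "cmod (extremal_h \<beta> (of_real r)) = \<beta> * r + (1 - \<beta>) * ((1 + r) / (1 - r)) * r"
    using \<beta> r by (simp only: norm_of_real) simp
  have "extremal_h \<beta> (- of_real r) = of_real (- r + 2 * (1 - \<beta>) * r ^ 2 / (1 + r))"
    using extremal_h_closed_form[of "- of_real r" \<beta>] r by simp
  moreover have "- r + 2 * (1 - \<beta>) * r ^ 2 / (1 + r) = - (\<beta> * r + (1 - \<beta>) * ((1 - r) / (1 + r)) * r)"
    using r by (simp add: field_simps power2_eq_square)
  ultimately show "cmod (extremal_h \<beta> (- of_real r)) = \<beta> * r + (1 - \<beta>) * ((1 - r) / (1 + r)) * r"
    using \<beta> r by (simp only: norm_of_real abs_minus) simp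
qed

theorem mainTheorem3:
  fixes \<beta> :: real and h g :: "complex \<Rightarrow> complex"
  assumes "0 \<le> \<beta>" and "\<beta> < 1"
    and "G_tilde_H0 \<beta> h g"
  shows "(\<forall>n\<ge>2. cmod (tcoeff h n) + cmod (tcoeff g n) \<le> 2 * (1 - \<beta>))
    \<and> (\<forall>z\<in>ball 0 1.
         \<beta> * cmod z + (1 - \<beta>) * ((1 - cmod z) / (1 + cmod z)) * cmod z \<le> cmod (h z + cnj (g z))
       \<and> cmod (h z + cnj (g z)) \<le> \<beta> * cmod z + (1 - \<beta>) * ((1 + cmod z) / (1 - cmod z)) * cmod z)
    \<and> (let h0 = (\<lambda>z::complex. z + (\<Sum>n. of_real (2 * (1 - \<beta>)) * z ^ (n + 2)));
           g0 = (\<lambda>z::complex. 0::complex)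
       in G_tilde_H0 \<beta> h0 g0 \<and>
          (\<forall>r::real. 0 \<le> r \<and> r < 1 \<longrightarrow>
             cmod (h0 (of_real r) + cnj (g0 (of_real r))) = \<beta> * r + (1 - \<beta>) * ((1 + r) / (1 - r)) * r
           \<and> cmod (h0 (- of_real r) + cnj (g0 (- of_real r))) = \<beta> * r + (1 - \<beta>) * ((1 - r) / (1 + r)) * r))"
proof -
  have "(\<lambda>z::complex. z + (\<Sum>n. of_real (2 * (1 - \<beta>)) * z ^ (n + 2))) = extremal_h \<beta>"
    by (simp add: extremal_h_def fun_eq_iff)
  then show ?thesis
    using G_tilde_H0_coeff_bound[OF assms(3)]
      G_tilde_H0_growth_lower[OF assms(3,1,2)] G_tilde_H0_growth_upper[OF assms(3,1,2)]
      G_tilde_H0_extremal[OF assms(2)] extremal_h_real[OF assms(1,2)]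
    by (simp add: Let_def)
qed

end
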